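(* For each elementary cellular automaton $F$ with rule number in $\{0, 1, 2, 4, 8, 10, 12, 19, 24, 34, 36, 38, 42, 46, 72, 76, 108, 127, 138, 200\}$, the deterministic communication complexity $D(\textsc{Pred}_{F,n})$ is $O(1)$, i.e. bounded by a constant independent of $n$.
   Context: An elementary cellular automaton (ECA) with rule number $N\in\{0,\dots,255\}$ is the map $F:\{0,1\}^{\mathbb Z}\to\{0,1\}^{\mathbb Z}$ given by $F(x)_i=f(x_{i-1},x_i,x_{i+1})$. Here the local rule $f:\{0,1\}^3\to\{0,1\}$ is determined by $N=\sum_{a,b,c\in\{0,1\}}2^{4a+2b+c}f(a,b,c)$. On a finite word of length $m\ge 3$, $F$ produces the word of length $m-2$ obtained by applying $f$ at every position whose full neighbourhood lies in the word. For $n\ge1$, $\textsc{Pred}_{F,n}:\{0,1\}^{2n+1}\to\{0,1\}$ maps a word $x=x_{-n}\cdots x_n$ to the single letter of $F^n(x)$, i.e. the state of the central cell after $n$ steps. For a function $g:X\times Y\to Z$, $D(g)$ is the minimal depth of a deterministic two-party protocol computing $g$. In such a protocol, Alice knows $x$ and Bob knows $y$. The protocol is a binary tree: each internal node is labelled by a function of Alice's input only or of Bob's input only, with values in $\{\text{left},\text{right}\}$, and each leaf is labelled by an output value. For $g:\{0,1\}^m\to Z$, set $D(g)=\max_{0\le i<m}D(g_i)$, where $g_i:\{0,1\}^i\times\{0,1\}^{m-i}\to Z$ is $g_i(x,y)=g(xy)$. *)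

theory Defs
  imports Main
begin

definition bitval :: "bool \<Rightarrow> nat" where
  "bitval b = (if b then 1 else 0)"

definition eca_local :: "nat \<Rightarrow> bool \<Rightarrow> bool \<Rightarrow> bool \<Rightarrow> bool" where
  "eca_local N a b c = odd (N div 2 ^ (4 * bitval a + 2 * bitval b + bitval c))"

definition eca_word :: "nat \<Rightarrow> bool list \<Rightarrow> bool list" where
  "eca_word N w = map (\<lambda>i. eca_local N (w ! i) (w ! (i + 1)) (w ! (i + 2))) [0..<length w - 2]"

(* Pred_{F,n}: word of length 2n+1 to the single letter of F^n(x) *)
definition Pred :: "nat \<Rightarrow> nat \<Rightarrow> bool list \<Rightarrow> bool" where
  "Pred N n x = hd ((eca_word N ^^ n) x)"

datatype ('x, 'y, 'z) protocol =
    Leaf 'z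
  | AliceNode "'x \<Rightarrow> bool" "('x, 'y, 'z) protocol" "('x, 'y, 'z) protocol"
  | BobNode "'y \<Rightarrow> bool" "('x, 'y, 'z) protocol" "('x, 'y, 'z) protocol"

fun run :: "('x, 'y, 'z) protocol \<Rightarrow> 'x \<Rightarrow> 'y \<Rightarrow> 'z" where
  "run (Leaf z) x y = z"
| "run (AliceNode q l r) x y = (if q x then run l x y else run r x y)"
| "run (BobNode q l r) x y = (if q y then run l x y else run r x y)"

fun depth :: "('x, 'y, 'z) protocol \<Rightarrow> nat" where
  "depth (Leaf z) = 0"
| "depth (AliceNode q l r) = Suc (max (depth l) (depth r))"
| "depth (BobNode q l r) = Suc (max (depth l) (depth r))"

definition D2 :: "'x set \<Rightarrow> 'y set \<Rightarrow> ('x \<Rightarrow> 'y \<Rightarrow> 'z) \<Rightarrow> nat" where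
  "D2 X Y g = (LEAST d. \<exists>p :: ('x, 'y, 'z) protocol.
      depth p = d \<and> (\<forall>x\<in>X. \<forall>y\<in>Y. run p x y = g x y))"

definition words :: "nat \<Rightarrow> bool list set" where
  "words m = {w. length w = m}"

definition D :: "nat \<Rightarrow> (bool list \<Rightarrow> 'z) \<Rightarrow> nat" where
  "D m g = Max ((\<lambda>i. D2 (words i) (words (m - i)) (\<lambda>x y. g (x @ y))) ` {0..<m})"

end

theory Submission
  imports Defs
begin

(*
  For each listed rule F there are t and p > 0 such that p extra steps of F can be
  "short-cut": on every word v of length 2(t+p)+1 the single letter F^(t+p)(v) equals
  F^t applied to a factor of v of length 2t+1 starting at a fixed offset.  Since F commutes
  with taking factors (up to shrinking by 2 cells per step), iterating the shortcut shows
  that Pred_{F,n} depends only on a factor (window) of its input of width at most 2(t+p),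
  whatever n is.  A function that depends only on a window of width k has communication
  complexity at most k+1 at every cut: Alice sends her part of the window bit by bit and
  Bob announces the answer.
*)


section \<open>Communication protocols\<close>

text \<open>If every input of Alice determines a message of k bits, then any function of
  (message, Bob's input) is computed by a protocol of depth at most k+1: Alice sends the
  message one bit per level, and Bob outputs the value in a final round.\<close>

lemma message_protocol:
  fixes msg :: "'x \<Rightarrow> bool list" and H :: "bool list \<Rightarrow> 'y \<Rightarrow> bool"
  assumes "\<forall>x\<in>X. length (msg x) = k"
  shows "\<exists>p :: ('x, 'y, bool) protocol.
           depth p \<le> k + 1 \<and> (\<forall>x\<in>X. \<forall>y. run p x y = H (msg x) y)"
  using assms
proof (induction k arbitrary: msg H)
  case 0
  then show ?case
    by (intro exI[of _ "BobNode (H []) (Leaf True) (Leaf False)"]) simp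
next
  case (Suc k)
  have tl_len: "\<forall>x\<in>X. length (tl (msg x)) = k"
    using Suc.prems by simp
  obtain p1 :: "('x, 'y, bool) protocol" where p1: "depth p1 \<le> k + 1"
    "\<forall>x\<in>X. \<forall>y. run p1 x y = H (True # tl (msg x)) y"
    using Suc.IH[OF tl_len, of "\<lambda>r. H (True # r)"] by blast
  obtain p2 :: "('x, 'y, bool) protocol" where p2: "depth p2 \<le> k + 1"
    "\<forall>x\<in>X. \<forall>y. run p2 x y = H (False # tl (msg x)) y"
    using Suc.IH[OF tl_len, of "\<lambda>r. H (False # r)"] by blast
  have "run (AliceNode (\<lambda>x. hd (msg x)) p1 p2) x y = H (msg x) y" if x: "x \<in> X" for x y
  proof -
    obtain b r where "msg x = b # r"
      using Suc.prems x by (cases "msg x") auto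
    then show ?thesis
      using p1(2) p2(2) x by (cases b) auto
  qed
  moreover have "depth (AliceNode (\<lambda>x. hd (msg x)) p1 p2) \<le> Suc k + 1"
    using p1(1) p2(1) by simp
  ultimately show ?case by blast
qed

lemma D2_le_message_length:
  fixes g :: "'x \<Rightarrow> 'y \<Rightarrow> bool" and msg :: "'x \<Rightarrow> bool list"
  assumes len: "\<forall>x\<in>X. length (msg x) = k"
    and determined: "\<forall>x\<in>X. \<forall>x'\<in>X. msg x = msg x' \<longrightarrow> (\<forall>y\<in>Y. g x y = g x' y)"
  shows "D2 X Y g \<le> k + 1"
proof -
  define rep where "rep r = (SOME x. x \<in> X \<and> msg x = r)" for r
  obtain p :: "('x, 'y, bool) protocol" where p: "depth p \<le> k + 1"
    "\<forall>x\<in>X. \<forall>y. run p x y = g (rep (msg x)) y"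
    using message_protocol[OF len, of "\<lambda>r. g (rep r)"] by blast
  have "run p x y = g x y" if "x \<in> X" "y \<in> Y" for x y
  proof -
    have "rep (msg x) \<in> X \<and> msg (rep (msg x)) = msg x"
      unfolding rep_def by (rule someI_ex) (use that in blast)
    then show ?thesis
      using p(2) determined that by metis
  qed
  then have "D2 X Y g \<le> depth p"
    unfolding D2_def by (intro Least_le) blast
  with p(1) show ?thesis by simp
qed

text \<open>A function on words of length m that only depends on the factor w[a..b) of width at
  most k has D \<le> k+1: at every cut, Alice's message is her part of that factor.\<close>

lemma D_le_window_width:
  fixes g :: "bool list \<Rightarrow> bool"
  assumes "0 < m" and width: "b - a \<le> k"
    and window: "\<forall>w\<in>words m. g w = G (drop a (take b w))"
  shows "D m g \<le> k + 1"
proof -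
  have cut: "D2 (words i) (words (m - i)) (\<lambda>x y. g (x @ y)) \<le> k + 1" if "i < m" for i
  proof -
    have "D2 (words i) (words (m - i)) (\<lambda>x y. g (x @ y)) \<le> (min b i - a) + 1"
    proof (rule D2_le_message_length[where msg = "\<lambda>x. drop a (take b x)"])
      show "\<forall>x\<in>words i. length (drop a (take b x)) = min b i - a"
        by (simp add: words_def min.commute)
      show "\<forall>x\<in>words i. \<forall>x'\<in>words i. drop a (take b x) = drop a (take b x') \<longrightarrow>
          (\<forall>y\<in>words (m - i). g (x @ y) = g (x' @ y))"
      proof (intro ballI impI)
        fix x x' y assume x: "x \<in> words i" and x': "x' \<in> words i"
          and same: "drop a (take b x) = drop a (take b x')" and y: "y \<in> words (m - i)"
        have "drop a (take b (x @ y)) = drop a (take b (x' @ y))"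
          using same x x' by (simp add: words_def)
        moreover have "x @ y \<in> words m" "x' @ y \<in> words m"
          using x x' y that by (auto simp: words_def)
        ultimately show "g (x @ y) = g (x' @ y)"
          using window by metis
      qed
    qed
    also have "\<dots> \<le> k + 1"
      using width by simp
    finally show ?thesis .
  qed
  show ?thesis
    unfolding D_def using \<open>0 < m\<close> cut by (intro Max.boundedI) auto
qed


section \<open>Elementary cellular automata on finite words\<close>

lemma length_eca_word [simp]: "length (eca_word N w) = length w - 2"
  by (simp add: eca_word_def)

lemma nth_eca_word:
  "i < length w - 2 \<Longrightarrow> eca_word N w ! i = eca_local N (w ! i) (w ! (i + 1)) (w ! (i + 2))"
  by (simp add: eca_word_def)

lemma length_eca_pow: "length ((eca_word N ^^ k) w) = length w - 2 * k"
  by (induction k) auto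

lemma eca_word_factor:
  assumes "b \<le> length w"
  shows "eca_word N (drop a (take b w)) = drop a (take (b - 2) (eca_word N w))"
proof (rule nth_equalityI)
  show "length (eca_word N (drop a (take b w))) = length (drop a (take (b - 2) (eca_word N w)))"
    using assms by simp
next
  fix i assume "i < length (eca_word N (drop a (take b w)))"
  then have "a + i + 2 < b" "a + i < length w - 2"
    using assms by simp_all
  then show "eca_word N (drop a (take b w)) ! i = drop a (take (b - 2) (eca_word N w)) ! i"
    using assms by (simp add: nth_eca_word add.assoc)
qed

lemma eca_pow_factor:
  assumes "b \<le> length w"
  shows "(eca_word N ^^ k) (drop a (take b w)) = drop a (take (b - 2 * k) ((eca_word N ^^ k) w))"
proof (induction k)
  case (Suc k)
  have "b - 2 * k \<le> length ((eca_word N ^^ k) w)"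
    using assms by (simp add: length_eca_pow)
  then show ?case
    using Suc by (simp add: eca_word_factor)
qed simp


section \<open>Shortcuts and windows\<close>

definition shortcut :: "nat \<Rightarrow> nat \<Rightarrow> nat \<Rightarrow> nat \<Rightarrow> bool" where
  "shortcut N t p off \<longleftrightarrow> (\<forall>v. length v = 2 * (t + p) + 1 \<longrightarrow>
     (eca_word N ^^ (t + p)) v = (eca_word N ^^ t) (drop off (take (off + 2 * t + 1) v)))"

lemma Pred_shortcut:
  assumes sc: "shortcut N t p off" and "t \<le> m" and "off \<le> 2 * p"
    and len: "length w = 2 * (m + p) + 1"
  shows "Pred N (m + p) w = Pred N m (drop off (take (off + 2 * m + 1) w))"
proof -
  define k where "k = m - t"
  define u where "u = (eca_word N ^^ k) w"
  have m_eq: "m = t + k"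
    using \<open>t \<le> m\<close> by (simp add: k_def)
  have "length u = 2 * (t + p) + 1"
    using len by (simp add: u_def length_eca_pow m_eq)
  have "m + p = (t + p) + k"
    by (simp add: m_eq)
  then have "(eca_word N ^^ (m + p)) w = (eca_word N ^^ (t + p)) u"
    by (simp only: u_def funpow_add comp_apply)
  also have "\<dots> = (eca_word N ^^ t) (drop off (take (off + 2 * t + 1) u))"
    using sc \<open>length u = 2 * (t + p) + 1\<close> by (simp add: shortcut_def)
  also have "drop off (take (off + 2 * t + 1) u)
      = (eca_word N ^^ k) (drop off (take (off + 2 * m + 1) w))"
    using eca_pow_factor[where b = "off + 2 * m + 1" and w = w and N = N and k = k and a = off]
      len \<open>off \<le> 2 * p\<close> by (simp add: u_def m_eq)
  also have "(eca_word N ^^ t) \<dots> = (eca_word N ^^ m) (drop off (take (off + 2 * m + 1) w))"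
    by (simp only: m_eq funpow_add comp_apply)
  finally show ?thesis
    by (simp add: Pred_def)
qed

lemma Pred_window:
  assumes sc: "shortcut N t p off" and "0 < p" and "off \<le> 2 * p"
  shows "\<exists>a b G. b \<le> 2 * n + 1 \<and> b - a \<le> 2 * (t + p) \<and>
           (\<forall>w. length w = 2 * n + 1 \<longrightarrow> Pred N n w = G (drop a (take b w)))"
proof (induction n rule: less_induct)
  case (less n)
  show ?case
  proof (cases "n < t + p")
    case True
    then show ?thesis
      by (intro exI[of _ 0] exI[of _ "2 * n + 1"] exI[of _ "Pred N n"]) simp
  next
    case False
    define m where "m = n - p"
    have "t \<le> m" "n = m + p" "m < n"
      using False \<open>0 < p\<close> by (auto simp: m_def)
    obtain a b G where b: "b \<le> 2 * m + 1" "b - a \<le> 2 * (t + p)"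
      and G: "\<forall>w. length w = 2 * m + 1 \<longrightarrow> Pred N m w = G (drop a (take b w))"
      using less.IH[OF \<open>m < n\<close>] by blast
    have "Pred N n w = G (drop (off + a) (take (off + b) w))" if "length w = 2 * n + 1" for w
    proof -
      have "Pred N n w = Pred N m (drop off (take (off + 2 * m + 1) w))"
        using Pred_shortcut[OF sc \<open>t \<le> m\<close> \<open>off \<le> 2 * p\<close>] that \<open>n = m + p\<close> by simp
      also have "\<dots> = G (drop a (take b (drop off (take (off + 2 * m + 1) w))))"
        using G that \<open>n = m + p\<close> \<open>off \<le> 2 * p\<close> by simp
      also have "drop a (take b (drop off (take (off + 2 * m + 1) w)))
          = drop (off + a) (take (off + b) w)"
        using b(1) by (simp add: take_drop min_def add.commute)
      finally show ?thesis .
    qed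
    moreover have "off + b \<le> 2 * n + 1" "(off + b) - (off + a) \<le> 2 * (t + p)"
      using b \<open>n = m + p\<close> \<open>off \<le> 2 * p\<close> by auto
    ultimately show ?thesis by blast
  qed
qed

theorem D_Pred_bounded_by_shortcut:
  assumes "shortcut N t p off" and "0 < p" and "off \<le> 2 * p"
  shows "D (2 * n + 1) (Pred N n) \<le> 2 * (t + p) + 1"
proof -
  obtain a b G where "b - a \<le> 2 * (t + p)"
    and "\<forall>w. length w = 2 * n + 1 \<longrightarrow> Pred N n w = G (drop a (take b w))"
    using Pred_window[OF assms] by blast
  then show ?thesis
    by (intro D_le_window_width[where a = a and b = b and G = G]) (auto simp: words_def)
qed


section \<open>The twenty shortcuts\<close>

text \<open>Evaluation rules used to check a shortcut exhaustively: universal statements over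
  words of a given length are unrolled into all bit patterns, and F is computed letter
  by letter.\<close>

lemma all_lists_0: "(\<forall>v. length v = 0 \<longrightarrow> P v) \<longleftrightarrow> P []"
  by auto

lemma all_lists_Suc:
  "(\<forall>v. length v = Suc n \<longrightarrow> P v) \<longleftrightarrow> (\<forall>b u. length u = n \<longrightarrow> P (b # u))"
  by (simp add: length_Suc_conv) blast

lemma all_lists_numeral:
  "(\<forall>v. length v = numeral k \<longrightarrow> P v) \<longleftrightarrow> (\<forall>b u. length u = pred_numeral k \<longrightarrow> P (b # u))"
  by (simp add: numeral_eq_Suc all_lists_Suc)

lemma funpow_numeral: "f ^^ numeral k = f \<circ> f ^^ pred_numeral k"
  by (simp add: numeral_eq_Suc)

lemma bitval_simps: "bitval True = 1" "bitval False = 0"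
  by (simp_all add: bitval_def)

lemma eca_word_Cons: "eca_word N (a # b # c # r) = eca_local N a b c # eca_word N (b # c # r)"
proof (rule nth_equalityI)
  fix i assume "i < length (eca_word N (a # b # c # r))"
  then show "eca_word N (a # b # c # r) ! i = (eca_local N a b c # eca_word N (b # c # r)) ! i"
    by (cases i) (auto simp: nth_eca_word)
qed simp

lemma eca_word_short: "eca_word N [a, b] = []" "eca_word N [a] = []" "eca_word N [] = []"
  by (simp_all add: eca_word_def)

lemmas shortcut_eval = shortcut_def all_lists_0 all_lists_Suc all_lists_numeral all_bool_eq
  funpow_numeral eca_word_Cons eca_word_short eca_local_def bitval_simps

lemma rule_shortcuts:
  "shortcut 0 1 1 0"   "shortcut 1 1 2 2"   "shortcut 2 1 1 2"   "shortcut 4 1 1 1"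
  "shortcut 8 2 1 0"   "shortcut 10 1 1 2"  "shortcut 12 1 1 1"  "shortcut 19 2 2 2"
  "shortcut 24 2 1 0"  "shortcut 34 1 1 2"  "shortcut 36 2 1 1"  "shortcut 38 2 2 4"
  "shortcut 42 1 1 2"  "shortcut 46 2 1 2"  "shortcut 72 2 1 1"  "shortcut 76 1 1 1"
  "shortcut 108 2 2 2" "shortcut 127 1 2 2" "shortcut 138 1 1 2" "shortcut 200 1 1 1"
  by (simp_all add: shortcut_eval)

theorem mainTheorem2:
  assumes "N \<in> {0, 1, 2, 4, 8, 10, 12, 19, 24, 34, 36, 38, 42, 46, 72, 76, 108, 127, 138, 200}"
  shows "\<exists>C::nat. \<forall>n::nat \<ge> 1. D (2 * n + 1) (Pred N n) \<le> C"
proof -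
  obtain t p off where "shortcut N t p off" "0 < p" "off \<le> 2 * p"
    using assms rule_shortcuts by fastforce
  then have "\<forall>n. D (2 * n + 1) (Pred N n) \<le> 2 * (t + p) + 1"
    using D_Pred_bounded_by_shortcut by blast
  then show ?thesis by blast
qed

end
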